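(* Let $\mathcal{H}$ be a real Hilbert space, let $\ell\geq 0$, and let $g\in \Gamma_0(\mathcal{H})$ be such that its Legendre–Fenchel conjugate $g^{\ast}$ is bounded from below and $$\Vert x\Vert-\ell \leq \Vert \operatorname{prox}_g(x)\Vert \quad \text{for all } x\in \mathcal{H}.$$ Then $g(x)-g(0)\leq \ell \Vert x\Vert$ for all $x\in\mathcal{H}$. Moreover, if $\ell=0$, then $g$ is constant.
   Context: $\Gamma_0(\mathcal{H})$ denotes the set of proper, convex, lower semicontinuous functions $\mathcal{H}\to\mathbb{R}\cup\{+\infty\}$. The conjugate is $g^{\ast}(x^* )=\sup_{v\in\mathcal{H}}\{\langle x^*,v\rangle-g(v)\}$. For $g\in\Gamma_0(\mathcal{H})$, $\operatorname{prox}_g(x)=\operatorname{argmin}_{y\in\mathcal{H}}\{g(y)+\tfrac12\Vert x-y\Vert^2\}$. *)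

theory Defs
  imports "HOL-Analysis.Analysis" "HOL-Library.Extended_Real"
begin

text \<open>Functions H -> R \<union> {+\<infinity>} are modelled as ereal-valued functions never taking -\<infinity>.\<close>

definition proper_fun :: "('a \<Rightarrow> ereal) \<Rightarrow> bool" where
  "proper_fun g \<longleftrightarrow> (\<forall>x. g x \<noteq> -\<infinity>) \<and> (\<exists>x. g x \<noteq> \<infinity>)"

definition convex_fun :: "('a::real_vector \<Rightarrow> ereal) \<Rightarrow> bool" where
  "convex_fun g \<longleftrightarrow> (\<forall>x y. \<forall>t::real. 0 \<le> t \<and> t \<le> 1 \<longrightarrow>
      g ((1 - t) *\<^sub>R x + t *\<^sub>R y) \<le> ereal (1 - t) * g x + ereal t * g y)"

definition lsc_fun :: "('a::topological_space \<Rightarrow> ereal) \<Rightarrow> bool" where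
  "lsc_fun g \<longleftrightarrow> (\<forall>x. g x \<le> Liminf (at x) g)"

definition Gamma0 :: "('a::real_normed_vector \<Rightarrow> ereal) set" where
  "Gamma0 = {g. proper_fun g \<and> convex_fun g \<and> lsc_fun g}"

definition conjugate :: "('a::real_inner \<Rightarrow> ereal) \<Rightarrow> 'a \<Rightarrow> ereal" where
  "conjugate g xs = (SUP v. ereal (xs \<bullet> v) - g v)"

definition prox :: "('a::real_inner \<Rightarrow> ereal) \<Rightarrow> 'a \<Rightarrow> 'a" where
  "prox g x = (THE p. \<forall>y. g p + ereal ((1/2) * (norm (x - p))\<^sup>2) \<le> g y + ereal ((1/2) * (norm (x - y))\<^sup>2))"

end

theory Submission
  imports Defs
begin

text \<open>Write P = prox g and u x = x - P x. The variational inequality characterising P, the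
  Fenchel-Young equality g*(u x) = \<langle>u x, P x\<rangle> - g (P x) and the lower bound on g* bound
  \<langle>u z - u x, P x\<rangle> from above uniformly in x; testing this along the ray x = s u z against
  \<parallel>P x\<parallel> \<ge> \<parallel>x\<parallel> - l forces \<parallel>u z\<parallel> \<le> l. As u is nonexpansive, a fixed-point argument shows that P has
  dense range, and on that range g (P x) \<le> g 0 + \<langle>u x, P x\<rangle> \<le> g 0 + l \<parallel>P x\<parallel> (first with -inf g* in
  place of g 0, which shows g 0 < \<infinity>); lower semicontinuity extends the bound to the whole space.
  For l = 0 the point 0 maximises g, and convexity between x and -x makes g constant.\<close>

section \<open>Proper convex lower semicontinuous functions\<close>

lemma
  assumes "g \<in> Gamma0"
  shows Gamma0_neq_MInf: "g x \<noteq> -\<infinity>"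
    and Gamma0_finite_somewhere: "\<exists>x. g x \<noteq> \<infinity>"
    and Gamma0_convex: "convex_fun g"
    and Gamma0_lsc: "lsc_fun g"
  using assms unfolding Gamma0_def proper_fun_def by auto

lemma convex_funD_ereal:
  assumes "convex_fun g" "g a = ereal A" "g b = ereal B" "0 \<le> t" "t \<le> 1"
  shows "g ((1 - t) *\<^sub>R a + t *\<^sub>R b) \<le> ereal ((1 - t) * A + t * B)"
  using assms unfolding convex_fun_def by (metis plus_ereal.simps(1) times_ereal.simps(1))

lemma lsc_fun_le_limit:
  fixes g :: "'a::metric_space \<Rightarrow> ereal"
  assumes "lsc_fun g" "y \<longlonglongrightarrow> p" "\<And>n. g (y n) \<le> ereal (R n)" "R \<longlonglongrightarrow> r"
  shows "g p \<le> ereal r"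
proof (rule ccontr)
  assume "\<not> g p \<le> ereal r"
  then have "ereal r < g p" by simp
  then obtain z where z: "ereal r < ereal z" "ereal z < g p"
    using ereal_dense2 by blast
  then have "ereal z < Liminf (at p) g"
    using assms(1) unfolding lsc_fun_def using less_le_trans by blast
  then have "eventually (\<lambda>w. ereal z < g w) (at p)" by (rule less_LiminfD)
  then obtain d where d: "d > 0" "\<And>w. w \<noteq> p \<Longrightarrow> dist w p < d \<Longrightarrow> ereal z < g w"
    unfolding eventually_at by blast
  have "eventually (\<lambda>n. dist (y n) p < d) sequentially"
    using assms(2) d(1) by (rule tendstoD)
  moreover have "eventually (\<lambda>n. R n < z) sequentially"
    using assms(4) z(1) by (simp add: order_tendstoD(2))
  ultimately have "eventually (\<lambda>n. False) sequentially"
  proof eventually_elim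
    case (elim n)
    have "ereal z < g (y n)" using d(2)[of "y n"] elim z(2) by (cases "y n = p") auto
    also have "\<dots> \<le> ereal (R n)" by (rule assms(3))
    finally show False using elim by simp
  qed
  then show False by simp
qed

lemma lsc_fun_le_on_closure:
  fixes g :: "'a::metric_space \<Rightarrow> ereal"
  assumes "lsc_fun g" "isCont h y" "\<And>z. z \<in> S \<Longrightarrow> g z \<le> ereal (h z)" "y \<in> closure S"
  shows "g y \<le> ereal (h y)"
proof -
  obtain zs where zs: "\<And>n. zs n \<in> S" "zs \<longlonglongrightarrow> y"
    using assms(4) closure_sequential by blast
  show ?thesis
  proof (rule lsc_fun_le_limit[OF assms(1) zs(2)])
    show "g (zs n) \<le> ereal (h (zs n))" for n by (rule assms(3)[OF zs(1)])
    show "(\<lambda>n. h (zs n)) \<longlonglongrightarrow> h y" by (rule isCont_tendsto_compose[OF assms(2) zs(2)])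
  qed
qed

lemma convex_fun_minorant_from_ball:
  fixes g :: "'a::real_normed_vector \<Rightarrow> ereal"
  assumes "convex_fun g" "g x0 = ereal a" "g v \<noteq> -\<infinity>" "0 < d"
    and near: "\<And>w. norm (w - x0) < d \<Longrightarrow> ereal (a - 1) < g w"
  shows "ereal (a - 1 - 2 / d * norm (v - x0)) \<le> g v"
proof (cases "g v")
  case (real b)
  show ?thesis
  proof (cases "norm (v - x0) < d")
    case True
    have "ereal (a - 1 - 2 / d * norm (v - x0)) \<le> ereal (a - 1)" using assms(4) by simp
    then show ?thesis using near[OF True] by (rule order_trans[OF _ less_imp_le])
  next
    case False
    define t where "t = d / (2 * norm (v - x0))"
    have dist_v: "0 < norm (v - x0)" "d \<le> norm (v - x0)"
      using False assms(4) by (auto intro: less_le_trans)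
    have t: "0 < t" "t \<le> 1"
      unfolding t_def using assms(4) dist_v by (simp_all add: divide_le_eq)
    have "(1 - t) *\<^sub>R x0 + t *\<^sub>R v - x0 = t *\<^sub>R (v - x0)" by (simp add: algebra_simps)
    then have "norm ((1 - t) *\<^sub>R x0 + t *\<^sub>R v - x0) = d / 2"
      using assms(4) dist_v(1) t(1) by (simp add: t_def)
    then have "ereal (a - 1) < g ((1 - t) *\<^sub>R x0 + t *\<^sub>R v)" using assms(4) by (intro near) simp
    also have "\<dots> \<le> ereal ((1 - t) * a + t * b)"
      using convex_funD_ereal[OF assms(1,2) real] t by simp
    finally have "a - 1 / t < b" using t(1) by (simp add: field_simps)
    moreover have "1 / t = 2 / d * norm (v - x0)" using assms(4) dist_v(1) by (simp add: t_def)
    ultimately show ?thesis using real by simp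
  qed
qed (use assms(3) in simp_all)

lemma Gamma0_minorant_norm:
  fixes g :: "'a::real_normed_vector \<Rightarrow> ereal"
  assumes "g \<in> Gamma0"
  obtains A B where "0 \<le> B" "\<And>v. ereal (A - B * norm v) \<le> g v"
proof -
  obtain x0 where "g x0 \<noteq> \<infinity>" using Gamma0_finite_somewhere[OF assms] by blast
  then obtain a where a: "g x0 = ereal a"
    using Gamma0_neq_MInf[OF assms, of x0] by (cases "g x0") auto
  have "ereal (a - 1) < g x0" using a by simp
  also have "g x0 \<le> Liminf (at x0) g" using Gamma0_lsc[OF assms] unfolding lsc_fun_def by blast
  finally have "eventually (\<lambda>w. ereal (a - 1) < g w) (at x0)" by (rule less_LiminfD)
  then obtain d where d: "d > 0" "\<And>w. w \<noteq> x0 \<Longrightarrow> dist w x0 < d \<Longrightarrow> ereal (a - 1) < g w"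
    unfolding eventually_at by blast
  have near: "ereal (a - 1) < g w" if "norm (w - x0) < d" for w
    using d(2)[of w] that a by (cases "w = x0") (auto simp: dist_norm)
  show thesis
  proof
    show "0 \<le> 2 / d" using d(1) by simp
    fix v
    have "2 / d * norm (v - x0) \<le> 2 / d * (norm v + norm x0)"
      using d(1) norm_triangle_ineq4[of v x0] by (intro mult_left_mono) auto
    then have "ereal (a - 1 - 2 / d * norm x0 - 2 / d * norm v) \<le> ereal (a - 1 - 2 / d * norm (v - x0))"
      by (simp add: distrib_left)
    also have "\<dots> \<le> g v"
      using convex_fun_minorant_from_ball[OF Gamma0_convex[OF assms] a Gamma0_neq_MInf[OF assms] d(1) near] .
    finally show "ereal (a - 1 - 2 / d * norm x0 - 2 / d * norm v) \<le> g v" .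
  qed
qed

lemma Gamma0_prox_objective_bounded_below:
  fixes g :: "'a::real_inner \<Rightarrow> ereal"
  assumes "g \<in> Gamma0"
  obtains L where "\<And>y. ereal L \<le> g y + ereal ((1/2) * (norm (x - y))\<^sup>2)"
proof -
  obtain A B where AB: "0 \<le> B" "\<And>v. ereal (A - B * norm v) \<le> g v"
    using Gamma0_minorant_norm[OF assms] by blast
  have real_bound: "A - B * norm x - B\<^sup>2 / 2 \<le> A - B * norm y + (1/2) * (norm (x - y))\<^sup>2" for y
  proof -
    have "B * (norm y - norm x) \<le> B * norm (x - y)"
      using AB(1) norm_triangle_ineq2[of y x] by (simp add: mult_left_mono norm_minus_commute)
    moreover have "0 \<le> (B - norm (x - y))\<^sup>2" by simp
    ultimately show ?thesis by (simp add: power2_eq_square algebra_simps)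
  qed
  show thesis
  proof
    fix y
    have "ereal (A - B * norm x - B\<^sup>2 / 2) \<le> ereal (A - B * norm y) + ereal ((1/2) * (norm (x - y))\<^sup>2)"
      using real_bound[of y] by simp
    also have "\<dots> \<le> g y + ereal ((1/2) * (norm (x - y))\<^sup>2)"
      using AB(2) by (rule add_right_mono)
    finally show "ereal (A - B * norm x - B\<^sup>2 / 2) \<le> g y + ereal ((1/2) * (norm (x - y))\<^sup>2)" .
  qed
qed

lemma norm_diff_convex_combination_sq:
  fixes x a b :: "'a::real_inner"
  shows "(norm (x - ((1 - t) *\<^sub>R a + t *\<^sub>R b)))\<^sup>2 =
    (1 - t) * (norm (x - a))\<^sup>2 + t * (norm (x - b))\<^sup>2 - t * (1 - t) * (norm (a - b))\<^sup>2"
  by (simp add: power2_norm_eq_inner inner_diff_left inner_diff_right inner_add_left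
      inner_add_right inner_commute algebra_simps)

lemma prox_objective_strongly_convex:
  fixes x a b :: "'a::real_inner"
  assumes "convex_fun g" "g a = ereal A" "g b = ereal B" "0 \<le> t" "t \<le> 1"
  shows "g ((1 - t) *\<^sub>R a + t *\<^sub>R b) + ereal ((1/2) * (norm (x - ((1 - t) *\<^sub>R a + t *\<^sub>R b)))\<^sup>2)
    \<le> ereal ((1 - t) * (A + (1/2) * (norm (x - a))\<^sup>2) + t * (B + (1/2) * (norm (x - b))\<^sup>2)
             - t * (1 - t) / 2 * (norm (a - b))\<^sup>2)"
proof -
  let ?z = "(1 - t) *\<^sub>R a + t *\<^sub>R b"
  have "g ?z + ereal ((1/2) * (norm (x - ?z))\<^sup>2)
      \<le> ereal ((1 - t) * A + t * B) + ereal ((1/2) * (norm (x - ?z))\<^sup>2)"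
    using convex_funD_ereal[OF assms] by (rule add_right_mono)
  also have "\<dots> = ereal ((1 - t) * (A + (1/2) * (norm (x - a))\<^sup>2) + t * (B + (1/2) * (norm (x - b))\<^sup>2)
             - t * (1 - t) / 2 * (norm (a - b))\<^sup>2)"
    unfolding norm_diff_convex_combination_sq by (simp add: algebra_simps diff_divide_distrib add_divide_distrib)
  finally show ?thesis .
qed

lemma Cauchy_if_norm_diff_sq_le:
  fixes ys :: "nat \<Rightarrow> 'a::real_normed_vector"
  assumes "\<And>i j. (norm (ys i - ys j))\<^sup>2 \<le> e i + e j" and "e \<longlonglongrightarrow> 0"
  shows "Cauchy ys"
proof (rule CauchyI)
  fix \<epsilon> :: real
  assume "0 < \<epsilon>"
  then have "0 < \<epsilon>\<^sup>2 / 2" by simp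
  then have "eventually (\<lambda>n. e n < \<epsilon>\<^sup>2 / 2) sequentially"
    by (rule order_tendstoD(2)[OF assms(2)])
  then obtain M where M: "\<And>n. M \<le> n \<Longrightarrow> e n < \<epsilon>\<^sup>2 / 2"
    unfolding eventually_sequentially by blast
  have "norm (ys i - ys j) < \<epsilon>" if "M \<le> i" "M \<le> j" for i j
  proof -
    have "(norm (ys i - ys j))\<^sup>2 < \<epsilon>\<^sup>2"
      using assms(1)[of i j] M[OF that(1)] M[OF that(2)] by linarith
    then show ?thesis using \<open>0 < \<epsilon>\<close> by (simp add: power_less_imp_less_base)
  qed
  then show "\<exists>M. \<forall>m\<ge>M. \<forall>n\<ge>M. norm (ys m - ys n) < \<epsilon>" by blast
qed

section \<open>The proximal point\<close>

definition is_prox_point :: "('a::real_inner \<Rightarrow> ereal) \<Rightarrow> 'a \<Rightarrow> 'a \<Rightarrow> bool" where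
  "is_prox_point g x p \<longleftrightarrow>
     (\<forall>y. g p + ereal ((1/2) * (norm (x - p))\<^sup>2) \<le> g y + ereal ((1/2) * (norm (x - y))\<^sup>2))"

lemma prox_eq_The_is_prox_point: "prox g x = (THE p. is_prox_point g x p)"
  unfolding prox_def is_prox_point_def ..

lemma Cauchy_minimizing_sequence:
  fixes H :: "'a::real_normed_vector \<Rightarrow> real"
  assumes "D \<noteq> {}" "bdd_below (H ` D)"
    and mid: "\<And>a b. a \<in> D \<Longrightarrow> b \<in> D \<Longrightarrow>
      midpoint a b \<in> D \<and> H (midpoint a b) \<le> (H a + H b) / 2 - (norm (a - b))\<^sup>2 / 8"
  obtains ys where "\<And>n. ys n \<in> D" "(\<lambda>n. H (ys n)) \<longlonglongrightarrow> Inf (H ` D)" "Cauchy ys"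
proof -
  define m where "m = Inf (H ` D)"
  have m_le: "m \<le> H y" if "y \<in> D" for y
    unfolding m_def using assms(2) that by (simp add: cInf_lower)
  have "\<exists>y\<in>D. H y < m + inverse (real (Suc n))" for n
    using cInf_lessD[of "H ` D" "m + inverse (real (Suc n))"] assms(1) unfolding m_def by auto
  then obtain ys where ys: "\<And>n. ys n \<in> D" "\<And>n. H (ys n) < m + inverse (real (Suc n))"
    by metis
  have gap: "(norm (a - b))\<^sup>2 \<le> 4 * (H a - m) + 4 * (H b - m)" if "a \<in> D" "b \<in> D" for a b
  proof -
    have mD: "midpoint a b \<in> D" and mH: "H (midpoint a b) \<le> (H a + H b) / 2 - (norm (a - b))\<^sup>2 / 8"
      using mid[OF that] by auto
    show ?thesis using mH m_le[OF mD] by argo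
  qed
  have "Cauchy ys"
  proof (rule Cauchy_if_norm_diff_sq_le)
    show "(norm (ys i - ys j))\<^sup>2 \<le> 4 * inverse (real (Suc i)) + 4 * inverse (real (Suc j))" for i j
      using gap[OF ys(1) ys(1), of i j] ys(2)[of i] ys(2)[of j] by argo
    show "(\<lambda>n. 4 * inverse (real (Suc n))) \<longlonglongrightarrow> 0"
      using tendsto_mult_right_zero[OF LIMSEQ_inverse_real_of_nat] by simp
  qed
  moreover have "(\<lambda>n. H (ys n)) \<longlonglongrightarrow> m"
  proof (rule tendsto_sandwich[where f = "\<lambda>_. m" and h = "\<lambda>n. m + inverse (real (Suc n))"])
    show "eventually (\<lambda>n. m \<le> H (ys n)) sequentially" using m_le[OF ys(1)] by simp
    show "eventually (\<lambda>n. H (ys n) \<le> m + inverse (real (Suc n))) sequentially"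
      using ys(2) by (simp add: less_imp_le)
    show "(\<lambda>n. m + inverse (real (Suc n))) \<longlonglongrightarrow> m"
      using tendsto_add[OF tendsto_const LIMSEQ_inverse_real_of_nat, of m] by simp
  qed simp
  ultimately show thesis using that ys(1) unfolding m_def by blast
qed

lemma is_prox_point_exists:
  fixes g :: "'a::{real_inner, complete_space} \<Rightarrow> ereal"
  assumes "g \<in> Gamma0"
  obtains p where "is_prox_point g x p"
proof -
  define D where "D = {y. g y \<noteq> \<infinity>}"
  define H where "H y = real_of_ereal (g y) + (1/2) * (norm (x - y))\<^sup>2" for y
  have g_real: "g y = ereal (real_of_ereal (g y))" if "y \<in> D" for y
    using that Gamma0_neq_MInf[OF assms, of y] unfolding D_def by (cases "g y") auto
  have H_eq: "g y + ereal ((1/2) * (norm (x - y))\<^sup>2) = ereal (H y)" if "y \<in> D" for y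
    using g_real[OF that] unfolding H_def by (metis plus_ereal.simps(1))
  obtain L where "\<And>y. ereal L \<le> g y + ereal ((1/2) * (norm (x - y))\<^sup>2)"
    using Gamma0_prox_objective_bounded_below[OF assms] by blast
  then have "L \<le> H y" if "y \<in> D" for y
    using H_eq[OF that] by (metis ereal_less_eq(3))
  then have bdd: "bdd_below (H ` D)" by (auto intro!: bdd_belowI2[where m = L])
  have D_ne: "D \<noteq> {}" using Gamma0_finite_somewhere[OF assms] unfolding D_def by blast
  have mid: "midpoint a b \<in> D \<and> H (midpoint a b) \<le> (H a + H b) / 2 - (norm (a - b))\<^sup>2 / 8"
    if "a \<in> D" "b \<in> D" for a b
  proof -
    have "(1 - 1/2) *\<^sub>R a + (1/2) *\<^sub>R b = midpoint a b" by (simp add: midpoint_def scaleR_add_right)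
    then have "g (midpoint a b) + ereal ((1/2) * (norm (x - midpoint a b))\<^sup>2)
        \<le> ereal ((H a + H b) / 2 - (norm (a - b))\<^sup>2 / 8)"
      using prox_objective_strongly_convex[OF Gamma0_convex[OF assms] g_real[OF that(1)]
          g_real[OF that(2)], of "1/2" x] unfolding H_def by (simp add: algebra_simps add_divide_distrib)
    moreover from this have "midpoint a b \<in> D" unfolding D_def by auto
    ultimately show ?thesis using H_eq by fastforce
  qed
  obtain ys where ys: "\<And>n. ys n \<in> D" "(\<lambda>n. H (ys n)) \<longlonglongrightarrow> Inf (H ` D)" "Cauchy ys"
    using Cauchy_minimizing_sequence[OF D_ne bdd mid] by blast
  then obtain p where p: "ys \<longlonglongrightarrow> p" using Cauchy_convergent_iff convergent_def by blast
  have g_p: "g p \<le> ereal (Inf (H ` D) - (1/2) * (norm (x - p))\<^sup>2)"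
  proof (rule lsc_fun_le_limit[OF Gamma0_lsc[OF assms] p])
    show "g (ys n) \<le> ereal (H (ys n) - (1/2) * (norm (x - ys n))\<^sup>2)" for n
      unfolding H_def by (subst g_real[OF ys(1)]) simp
    show "(\<lambda>n. H (ys n) - (1/2) * (norm (x - ys n))\<^sup>2) \<longlonglongrightarrow> Inf (H ` D) - (1/2) * (norm (x - p))\<^sup>2"
      by (intro tendsto_intros ys(2) p)
  qed
  then have "p \<in> D" unfolding D_def by auto
  then obtain r where "g p = ereal r" using g_real by blast
  then have H_p: "H p \<le> H y" if "y \<in> D" for y
    using g_p cInf_lower[OF imageI[OF that] bdd] unfolding H_def by simp
  have "is_prox_point g x p"
    unfolding is_prox_point_def
  proof
    fix y
    show "g p + ereal ((1/2) * (norm (x - p))\<^sup>2) \<le> g y + ereal ((1/2) * (norm (x - y))\<^sup>2)"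
    proof (cases "y \<in> D")
      case True
      then show ?thesis using H_eq[OF True] H_eq[OF \<open>p \<in> D\<close>] H_p[OF True] by simp
    qed (simp add: D_def)
  qed
  then show thesis by (rule that)
qed

lemma is_prox_point_finite:
  assumes "g \<in> Gamma0" "is_prox_point g x p"
  shows "g p \<noteq> \<infinity>"
proof
  assume "g p = \<infinity>"
  obtain y where "g y \<noteq> \<infinity>" using Gamma0_finite_somewhere[OF assms(1)] by blast
  moreover have "g p + ereal ((1/2) * (norm (x - p))\<^sup>2) \<le> g y + ereal ((1/2) * (norm (x - y))\<^sup>2)"
    using assms(2) unfolding is_prox_point_def by blast
  ultimately show False using \<open>g p = \<infinity>\<close> by simp
qed

lemma is_prox_point_variational_ineq:
  fixes g :: "'a::real_inner \<Rightarrow> ereal"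
  assumes "g \<in> Gamma0" "is_prox_point g x p"
  shows "g p + ereal ((x - p) \<bullet> (v - p)) \<le> g v"
proof (cases "g v")
  case (real b)
  obtain a where a: "g p = ereal a"
    using is_prox_point_finite[OF assms] Gamma0_neq_MInf[OF assms(1), of p] by (cases "g p") auto
  let ?f = "\<lambda>t. b + (1/2) * (norm (x - v))\<^sup>2 - (1 - t) / 2 * (norm (p - v))\<^sup>2"
  have approx: "a + (1/2) * (norm (x - p))\<^sup>2 \<le> ?f t" if "0 < t" "t < 1" for t
  proof -
    let ?z = "(1 - t) *\<^sub>R p + t *\<^sub>R v"
    have "ereal (a + (1/2) * (norm (x - p))\<^sup>2) \<le> g ?z + ereal ((1/2) * (norm (x - ?z))\<^sup>2)"
      using assms(2) a unfolding is_prox_point_def by simp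
    also have "\<dots> \<le> ereal ((1 - t) * (a + (1/2) * (norm (x - p))\<^sup>2) + t * (b + (1/2) * (norm (x - v))\<^sup>2)
             - t * (1 - t) / 2 * (norm (p - v))\<^sup>2)"
      using prox_objective_strongly_convex[OF Gamma0_convex[OF assms(1)] a real] that by simp
    finally have "t * (a + (1/2) * (norm (x - p))\<^sup>2) \<le> t * ?f t"
      by (simp add: algebra_simps diff_divide_distrib add_divide_distrib)
    then show ?thesis using that(1) by simp
  qed
  have "a + (1/2) * (norm (x - p))\<^sup>2 \<le> ?f 0"
  proof (intro tendsto_lowerbound[where F = "at_right 0"])
    show "(?f \<longlongrightarrow> ?f 0) (at_right 0)" by (rule tendsto_eq_intros refl | simp)+
    show "eventually (\<lambda>t. a + (1/2) * (norm (x - p))\<^sup>2 \<le> ?f t) (at_right 0)"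
      using eventually_at_right_real[OF zero_less_one] by eventually_elim (use approx in auto)
  qed simp
  moreover have "(x - p) \<bullet> (v - p) = ((norm (x - p))\<^sup>2 + (norm (v - p))\<^sup>2 - (norm (x - v))\<^sup>2) / 2"
    using dot_norm_neg[of "x - p" "v - p"] by simp
  ultimately show ?thesis using a real by (simp add: norm_minus_commute)
qed (simp_all add: Gamma0_neq_MInf[OF assms(1)])

lemma is_prox_point_unique:
  fixes g :: "'a::real_inner \<Rightarrow> ereal"
  assumes "g \<in> Gamma0" "is_prox_point g x p" "is_prox_point g x q"
  shows "p = q"
proof -
  obtain a where a: "g p = ereal a"
    using is_prox_point_finite[OF assms(1,2)] Gamma0_neq_MInf[OF assms(1), of p] by (cases "g p") auto
  obtain b where b: "g q = ereal b"
    using is_prox_point_finite[OF assms(1,3)] Gamma0_neq_MInf[OF assms(1), of q] by (cases "g q") auto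
  have "a + (x - p) \<bullet> (q - p) \<le> b"
    using is_prox_point_variational_ineq[OF assms(1,2), of q] a b by simp
  moreover have "b + (x - q) \<bullet> (p - q) \<le> a"
    using is_prox_point_variational_ineq[OF assms(1,3), of p] a b by simp
  moreover have "(x - p) \<bullet> (q - p) + (x - q) \<bullet> (p - q) = (q - p) \<bullet> (q - p)"
    by (simp add: inner_diff_left inner_diff_right inner_commute)
  ultimately have "(q - p) \<bullet> (q - p) = 0" using inner_ge_zero[of "q - p"] by linarith
  then show ?thesis by simp
qed

lemma is_prox_point_prox:
  fixes g :: "'a::{real_inner, complete_space} \<Rightarrow> ereal"
  assumes "g \<in> Gamma0"
  shows "is_prox_point g x (prox g x)"
proof -
  obtain p where p: "is_prox_point g x p" using is_prox_point_exists[OF assms] .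
  show ?thesis
    unfolding prox_eq_The_is_prox_point
  proof (rule theI)
    show "is_prox_point g x p" by (rule p)
    show "q = p" if "is_prox_point g x q" for q using is_prox_point_unique[OF assms that p] .
  qed
qed

lemma prox_finite:
  fixes g :: "'a::{real_inner, complete_space} \<Rightarrow> ereal"
  assumes "g \<in> Gamma0"
  obtains a where "g (prox g x) = ereal a"
  using is_prox_point_finite[OF assms is_prox_point_prox[OF assms]]
    Gamma0_neq_MInf[OF assms, of "prox g x"] by (cases "g (prox g x)") auto

lemma prox_variational_ineq:
  fixes g :: "'a::{real_inner, complete_space} \<Rightarrow> ereal"
  assumes "g \<in> Gamma0"
  shows "g (prox g x) + ereal ((x - prox g x) \<bullet> (v - prox g x)) \<le> g v"
  using is_prox_point_variational_ineq[OF assms is_prox_point_prox[OF assms]] .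

lemma conjugate_prox_residual:
  fixes g :: "'a::{real_inner, complete_space} \<Rightarrow> ereal"
  assumes "g \<in> Gamma0"
  shows "conjugate g (x - prox g x) = ereal ((x - prox g x) \<bullet> prox g x) - g (prox g x)"
proof (rule antisym)
  let ?p = "prox g x" and ?u = "x - prox g x"
  obtain a where a: "g ?p = ereal a" using prox_finite[OF assms] .
  show "conjugate g ?u \<le> ereal (?u \<bullet> ?p) - g ?p"
    unfolding conjugate_def
  proof (rule SUP_least)
    fix v
    show "ereal (?u \<bullet> v) - g v \<le> ereal (?u \<bullet> ?p) - g ?p"
    proof (cases "g v")
      case (real b)
      then show ?thesis
        using prox_variational_ineq[OF assms, of x v] a by (simp add: inner_diff_right)
    qed (use Gamma0_neq_MInf[OF assms] in simp_all)
  qed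
  show "ereal (?u \<bullet> ?p) - g ?p \<le> conjugate g ?u"
    unfolding conjugate_def by (rule SUP_upper) simp
qed

lemma prox_le_if_conjugate_ge:
  fixes g :: "'a::{real_inner, complete_space} \<Rightarrow> ereal"
  assumes "g \<in> Gamma0" "\<And>y. ereal c \<le> conjugate g y"
  shows "g (prox g x) \<le> ereal ((x - prox g x) \<bullet> prox g x - c)"
proof -
  obtain a where "g (prox g x) = ereal a" using prox_finite[OF assms(1)] .
  then show ?thesis using assms(2)[of "x - prox g x"] conjugate_prox_residual[OF assms(1), of x] by simp
qed

lemma norm_add_sq:
  fixes a b :: "'a::real_inner"
  shows "(norm (a + b))\<^sup>2 = (norm a)\<^sup>2 + 2 * (a \<bullet> b) + (norm b)\<^sup>2"
  using dot_norm[of a b] by simp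

lemma prox_residual_nonexpansive:
  fixes g :: "'a::{real_inner, complete_space} \<Rightarrow> ereal"
  assumes "g \<in> Gamma0"
  shows "norm ((x - prox g x) - (y - prox g y)) \<le> norm (x - y)"
proof -
  let ?dp = "prox g x - prox g y" and ?du = "(x - prox g x) - (y - prox g y)"
  obtain a where a: "g (prox g x) = ereal a" using prox_finite[OF assms] .
  obtain b where b: "g (prox g y) = ereal b" using prox_finite[OF assms] .
  have "a + (x - prox g x) \<bullet> (prox g y - prox g x) \<le> b"
    using prox_variational_ineq[OF assms, of x "prox g y"] a b by simp
  moreover have "b + (y - prox g y) \<bullet> (prox g x - prox g y) \<le> a"
    using prox_variational_ineq[OF assms, of y "prox g x"] a b by simp
  moreover have "(x - prox g x) \<bullet> (prox g y - prox g x) + (y - prox g y) \<bullet> (prox g x - prox g y)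
      = - (?dp \<bullet> ?du)"
    by (simp add: inner_diff_left inner_diff_right inner_commute)
  ultimately have "0 \<le> ?dp \<bullet> ?du" by linarith
  moreover have "(norm (x - y))\<^sup>2 = (norm ?dp)\<^sup>2 + 2 * (?dp \<bullet> ?du) + (norm ?du)\<^sup>2"
    using norm_add_sq[of ?dp ?du] by (simp add: algebra_simps)
  ultimately have "(norm ?du)\<^sup>2 \<le> (norm (x - y))\<^sup>2" by simp
  then show ?thesis by (rule power2_le_imp_le) simp
qed

section \<open>The proximal residual under the growth hypothesis\<close>

lemma le_if_sq_growth_bounded:
  fixes a l K :: real
  assumes "0 \<le> l" and "\<And>s. 1 \<le> s \<Longrightarrow> l \<le> s * a \<Longrightarrow> (s * a - l)\<^sup>2 \<le> (s - 1)\<^sup>2 * a\<^sup>2 + K"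
  shows "a \<le> l"
proof (rule ccontr)
  assume "\<not> a \<le> l"
  define D where "D = 2 * a * (a - l)"
  have pos: "0 < D" using \<open>\<not> a \<le> l\<close> assms(1) by (simp add: D_def)
  define s where "s = (\<bar>K\<bar> + a\<^sup>2) / D + 1"
  have "1 \<le> s" using pos by (simp add: s_def)
  moreover have "0 \<le> a" using \<open>\<not> a \<le> l\<close> assms(1) by simp
  then have "l \<le> s * a" using \<open>\<not> a \<le> l\<close> mult_right_mono[OF \<open>1 \<le> s\<close>] by fastforce
  moreover have "s * D = \<bar>K\<bar> + a\<^sup>2 + D"
    using pos by (simp add: s_def field_simps)
  then have "K + a\<^sup>2 < 2 * s * a * (a - l)" using pos by (simp add: D_def algebra_simps)
  moreover have "(s * a - l)\<^sup>2 - (s - 1)\<^sup>2 * a\<^sup>2 = 2 * s * a * (a - l) - a\<^sup>2 + l\<^sup>2"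
    by (simp add: power2_eq_square algebra_simps)
  ultimately show False using assms(2) zero_le_power2[of l] by fastforce
qed

lemma prox_residual_norm_le:
  fixes g :: "'a::{real_inner, complete_space} \<Rightarrow> ereal"
  assumes "0 \<le> l" "g \<in> Gamma0" "\<And>y. ereal c \<le> conjugate g y"
    and "\<And>x. norm x - l \<le> norm (prox g x)"
  shows "norm (z - prox g z) \<le> l"
proof -
  let ?u = "z - prox g z"
  obtain r where r: "g (prox g z) = ereal r" using prox_finite[OF assms(2)] .
  define K where "K = ?u \<bullet> prox g z - r - c"
  have pairing: "(?u - (x - prox g x)) \<bullet> prox g x \<le> K" for x
  proof -
    obtain a where a: "g (prox g x) = ereal a" using prox_finite[OF assms(2)] .
    have "r + ?u \<bullet> (prox g x - prox g z) \<le> a"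
      using prox_variational_ineq[OF assms(2), of z "prox g x"] r a by simp
    moreover have "a \<le> (x - prox g x) \<bullet> prox g x - c"
      using prox_le_if_conjugate_ge[OF assms(2,3), of x] a by simp
    ultimately show ?thesis unfolding K_def by (simp add: inner_diff_left inner_diff_right)
  qed
  \<comment> \<open>Along the ray through the residual, the hypothesis makes the proximal points grow like
    s \<parallel>u\<parallel> - l, whereas the pairing bound keeps them within (s - 1) \<parallel>u\<parallel> + O(1).\<close>
  have "(s * norm ?u - l)\<^sup>2 \<le> (s - 1)\<^sup>2 * (norm ?u)\<^sup>2 + 2 * K" if "1 \<le> s" "l \<le> s * norm ?u" for s
  proof -
    define x where "x = s *\<^sub>R ?u"
    have "(norm (x - ?u))\<^sup>2
        = (norm (prox g x))\<^sup>2 + 2 * (prox g x \<bullet> ((x - prox g x) - ?u)) + (norm ((x - prox g x) - ?u))\<^sup>2"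
      using norm_add_sq[of "prox g x" "(x - prox g x) - ?u"] by simp
    moreover have "- K \<le> prox g x \<bullet> ((x - prox g x) - ?u)"
      using pairing[of x] by (simp add: inner_diff_left inner_diff_right inner_commute)
    ultimately have "(norm (prox g x))\<^sup>2 \<le> (norm (x - ?u))\<^sup>2 + 2 * K"
      using zero_le_power2[of "norm ((x - prox g x) - ?u)"] by linarith
    moreover have "x - ?u = (s - 1) *\<^sub>R ?u" by (simp add: x_def algebra_simps)
    then have "(norm (x - ?u))\<^sup>2 = (s - 1)\<^sup>2 * (norm ?u)\<^sup>2"
      using that(1) by (simp add: power_mult_distrib)
    moreover have "(s * norm ?u - l)\<^sup>2 \<le> (norm (prox g x))\<^sup>2"
      using assms(4)[of x] that by (intro power_mono) (simp_all add: x_def)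
    ultimately show ?thesis by linarith
  qed
  then show ?thesis by (rule le_if_sq_growth_bounded[OF assms(1)])
qed

lemma closure_range_prox_eq_UNIV:
  fixes g :: "'a::{real_inner, complete_space} \<Rightarrow> ereal"
  assumes "g \<in> Gamma0" "\<And>x. norm (x - prox g x) \<le> l"
  shows "closure (range (prox g)) = UNIV"
proof -
  have "0 \<le> l" using assms(2) norm_ge_zero order_trans by blast
  have "\<exists>p\<in>range (prox g). dist p y < e" if "0 < e" for y e
  proof -
    define t where "t = min 1 (e / (l + 1))"
    have t: "0 < t" "t \<le> 1" using \<open>0 \<le> l\<close> that by (auto simp: t_def)
    have "t * l \<le> e / (l + 1) * l" using \<open>0 \<le> l\<close> by (intro mult_right_mono) (auto simp: t_def)
    also have "\<dots> < e" using \<open>0 \<le> l\<close> that by (simp add: field_simps)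
    finally have "t * l < e" .
    \<comment> \<open>The fixed point is chosen so that prox g z - y = - t (z - prox g z).\<close>
    have "\<exists>!z. y + (1 - t) *\<^sub>R (z - prox g z) = z"
    proof (rule banach_fix_type)
      show "\<forall>z w. dist (y + (1 - t) *\<^sub>R (z - prox g z)) (y + (1 - t) *\<^sub>R (w - prox g w)) \<le> (1 - t) * dist z w"
        using t prox_residual_nonexpansive[OF assms(1)]
        by (simp add: dist_norm scaleR_diff_right[symmetric] mult_left_mono)
    qed (use t in auto)
    then obtain z where z: "y + (1 - t) *\<^sub>R (z - prox g z) = z" by blast
    have "z - y = (1 - t) *\<^sub>R (z - prox g z)" by (subst (1) z[symmetric]) simp
    then have "prox g z - y = (1 - t) *\<^sub>R (z - prox g z) - (z - prox g z)"
      by (simp add: algebra_simps)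
    then have "prox g z - y = - t *\<^sub>R (z - prox g z)" by (simp add: algebra_simps)
    then have "dist (prox g z) y = t * norm (z - prox g z)" using t by (simp add: dist_norm)
    also have "\<dots> \<le> t * l" using t assms(2) by (simp add: mult_left_mono)
    finally have "dist (prox g z) y < e" using \<open>t * l < e\<close> by simp
    then show ?thesis by blast
  qed
  then have "y \<in> closure (range (prox g))" for y by (simp add: closure_approachable)
  then show ?thesis by blast
qed

lemma Gamma0_le_if_le_on_range_prox:
  fixes g :: "'a::{real_inner, complete_space} \<Rightarrow> ereal"
  assumes "g \<in> Gamma0" "\<And>x. norm (x - prox g x) \<le> l" "isCont h y"
    and "\<And>x. g (prox g x) \<le> ereal (h (prox g x))"
  shows "g y \<le> ereal (h y)"
  using lsc_fun_le_on_closure[OF Gamma0_lsc[OF assms(1)] assms(3), of "range (prox g)"]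
    closure_range_prox_eq_UNIV[OF assms(1,2)] assms(4) by auto

lemma convex_fun_const_if_max_at_0:
  fixes g :: "'a::real_vector \<Rightarrow> ereal"
  assumes "convex_fun g" "\<And>x. g x \<noteq> -\<infinity>" "g 0 \<noteq> \<infinity>" "\<And>x. g x \<le> g 0"
  shows "g x = g 0"
proof -
  obtain c where c: "g 0 = ereal c" using assms(2,3) by (cases "g 0") auto
  obtain a where a: "g x = ereal a" using assms(2)[of x] assms(4)[of x] c by (cases "g x") auto
  obtain b where b: "g (- x) = ereal b" using assms(2)[of "- x"] assms(4)[of "- x"] c by (cases "g (- x)") auto
  have "a \<le> c" "b \<le> c" using assms(4)[of x] assms(4)[of "- x"] a b c by simp_all
  moreover have "(1 - 1/2) *\<^sub>R x + (1/2) *\<^sub>R (- x) = 0" by simp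
  then have "g 0 \<le> ereal ((1 - 1/2) * a + (1/2) * b)"
    using convex_funD_ereal[OF assms(1) a b, of "1/2"] by simp
  then have "c \<le> (1/2) * a + (1/2) * b" using c by simp
  ultimately show ?thesis using a c by simp
qed

theorem proposition3:
  fixes g :: "'a::{real_inner, complete_space} \<Rightarrow> ereal" and l :: real
  assumes "l \<ge> 0"
    and "g \<in> Gamma0"
    and "\<exists>c::real. \<forall>y. ereal c \<le> conjugate g y"
    and "\<forall>x. norm x - l \<le> norm (prox g x)"
  shows "g 0 \<noteq> \<infinity> \<and> (\<forall>x. g x - g 0 \<le> ereal (l * norm x))
         \<and> (l = 0 \<longrightarrow> (\<exists>c. \<forall>x. g x = c))"
proof -
  obtain c :: real where c: "\<And>y. ereal c \<le> conjugate g y" using assms(3) by blast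
  have residual_le: "norm (x - prox g x) \<le> l" for x
    using prox_residual_norm_le[OF assms(1,2) c] assms(4) by blast
  have pairing_le: "(x - prox g x) \<bullet> prox g x \<le> l * norm (prox g x)" for x
    using norm_cauchy_schwarz[of "x - prox g x" "prox g x"] mult_right_mono[OF residual_le[of x]]
    by (meson norm_ge_zero order_trans)
  have extend: "g y \<le> ereal (A + l * norm y)"
    if "\<And>x. g (prox g x) \<le> ereal (A + l * norm (prox g x))" for A y
    by (rule Gamma0_le_if_le_on_range_prox[OF assms(2) residual_le]) (auto intro: continuous_intros that)
  have "g 0 \<le> ereal (- c + l * norm (0::'a))"
  proof (rule extend)
    show "g (prox g x) \<le> ereal (- c + l * norm (prox g x))" for x
      using prox_le_if_conjugate_ge[OF assms(2) c, of x] pairing_le[of x] by (simp add: order_trans)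
  qed
  then obtain g0 where g0: "g 0 = ereal g0" using Gamma0_neq_MInf[OF assms(2), of 0] by (cases "g 0") auto
  have bound: "g y \<le> ereal (g0 + l * norm y)" for y
  proof (rule extend)
    fix x
    obtain a where a: "g (prox g x) = ereal a" using prox_finite[OF assms(2)] .
    then show "g (prox g x) \<le> ereal (g0 + l * norm (prox g x))"
      using prox_variational_ineq[OF assms(2), of x 0] g0 pairing_le[of x] by simp
  qed
  have "g x - g 0 \<le> ereal (l * norm x)" for x
    using bound[of x] g0 Gamma0_neq_MInf[OF assms(2), of x] by (cases "g x") auto
  moreover have "\<forall>x. g x = g 0" if "l = 0"
    using convex_fun_const_if_max_at_0[OF Gamma0_convex[OF assms(2)] Gamma0_neq_MInf[OF assms(2)]]
      bound g0 that by simp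
  ultimately show ?thesis using g0 by auto
qed

end
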